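(* Let $A$ and $d$ be positive integers with $d<A-1$, and let $r$ be the maximum number of distinct preferences over $A$ alternatives that are simultaneously representable in a $d$-dimensional Euclidean preference model. Let $\ell$ be the number of unique preferences in a given profile and suppose $\ell\geq r$. Label the alternatives $a_1,\dots,a_A$, let $M=A-d$, and for $n\in\{1,\dots,M-1\}$ let $E_n$ be the event that a uniformly random strict ordering of $a_1,\dots,a_A$ places $a_n$ within its first $M-n$ positions. Let $C=\bigcup_{n=1}^{M-1} E_n$. Then $$r \leq \hat{r} = \left(1-\mathbb{P}(C)\right) A!.$$
   Context: A preference is a strict total order on the alternatives. A set of preferences $\{>_1,\dots,>_m\}$ over alternatives $a_1,\dots,a_A$ is simultaneously representable in a $d$-dimensional Euclidean preference model if there exist points $x^{a}\in\mathbb{R}^d$ for each alternative $a$ and $w^{i}\in\mathbb{R}^d$ for each $i\in\{1,\dots,m\}$ such that for all alternatives $a,b$ and all $i$, $a>_i b \iff \|x^a-w^i\|<\|x^b-w^i\|$ (standard Euclidean norm). A profile is an assignment of preferences to a population of individuals; its number of unique preferences is the number of distinct preferences it contains. *)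

theory Defs
  imports "HOL-Probability.Probability_Mass_Function"
begin

text \<open>Alternatives are labelled 1..A (alternative a_n is the number n).
A preference is a strict total order on {1..A}, given as a relation R with
(a,b) in R meaning a is strictly preferred to b.\<close>

definition prefs :: "nat \<Rightarrow> nat rel set" where
  "prefs A = {R. R \<subseteq> {1..A} \<times> {1..A} \<and> strict_linear_order_on {1..A} R}"

text \<open>Euclidean distance in R^d, points given as functions nat => real
(only coordinates 0..d-1 are relevant).\<close>
definition edist :: "nat \<Rightarrow> (nat \<Rightarrow> real) \<Rightarrow> (nat \<Rightarrow> real) \<Rightarrow> real" where
  "edist d x y = sqrt (\<Sum>i<d. (x i - y i)^2)"

definition representable :: "nat \<Rightarrow> nat \<Rightarrow> nat rel set \<Rightarrow> bool" where
  "representable d A S \<longleftrightarrow>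
     (\<exists>(x :: nat \<Rightarrow> nat \<Rightarrow> real) (w :: nat rel \<Rightarrow> nat \<Rightarrow> real).
        \<forall>R\<in>S. \<forall>a\<in>{1..A}. \<forall>b\<in>{1..A}.
          ((a, b) \<in> R \<longleftrightarrow> edist d (x a) (w R) < edist d (x b) (w R)))"

definition max_repr :: "nat \<Rightarrow> nat \<Rightarrow> nat" where
  "max_repr d A = Max {card S | S. S \<subseteq> prefs A \<and> representable d A S}"

definition position :: "nat rel \<Rightarrow> nat \<Rightarrow> nat" where
  "position R a = card {b. (b, a) \<in> R} + 1"

definition event_C :: "nat \<Rightarrow> nat \<Rightarrow> nat rel set" where
  "event_C A d = {R \<in> prefs A. \<exists>n\<in>{1..A - d - 1}. position R n \<le> (A - d) - n}"

end

theory Submission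
  imports Defs "HOL-Combinatorics.Multiset_Permutations"
begin

(* Squaring distances, the ideal point w ranks alternative a by |x_a|^2 - 2 <x_a, w>, an affine
   function of w in R^d. Rankings of n points by affine functions of k parameters number at most
   Q(n, k), where Q(n+1, k+1) = Q(n, k+1) + n Q(n, k): the rankings of X + {e} that extend a fixed
   ranking tau of X are determined by the set of points below e; these sets form a chain, and two
   of them differ only at points b for which tau is also realised on the hyperplane where e and b
   tie, a family with one parameter fewer. Next, Q(A, d) <= (d+1)^(A-d-1) (d+1)!, and at least that
   many orderings avoid C: insert a_(M-1), ..., a_1 in turn into an ordering of a_M, ..., a_A, each
   at one of d+1 places late enough. As there are at most A! orderings, their number is at most
   (1 - P(C)) A!. *)

section \<open>Orderings induced by functions, and chains\<close>

lemma card_chain_le: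
  assumes "finite (\<Union>K)" "chain\<^sub>\<subseteq> K"
  shows "card K \<le> 1 + card (\<Union>K - \<Inter>K)"
proof (cases "K = {}")
  case False
  have fin: "finite A" if "A \<in> K" for A
    using assms(1) that by (meson Union_upper finite_subset)
  have "inj_on card K"
    using assms(2) fin unfolding chain_subset_def by (intro inj_onI) (metis card_subset_eq)
  moreover have "card ` K \<subseteq> {card (\<Inter>K)..card (\<Union>K)}"
    using fin assms(1) by (auto intro!: card_mono Inter_lower Union_upper intro: finite_subset)
  ultimately have "card K \<le> card {card (\<Inter>K)..card (\<Union>K)}"
    by (intro card_inj_on_le) auto
  moreover have "\<Inter>K \<subseteq> \<Union>K" using False by blast
  ultimately show ?thesis
    using assms(1) by (simp add: card_Diff_subset finite_subset card_mono)
qed simp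

definition order_by :: "'a set \<Rightarrow> ('a \<Rightarrow> 'b::linorder) \<Rightarrow> 'a rel" where
  "order_by X f = {(a, b). a \<in> X \<and> b \<in> X \<and> f a < f b}"

lemma order_by_subset: "order_by X f \<subseteq> X \<times> X"
  unfolding order_by_def by auto

lemma order_by_restrict: "Y \<subseteq> X \<Longrightarrow> order_by X f \<inter> Y \<times> Y = order_by Y f"
  unfolding order_by_def by auto

lemma total_on_order_by: "inj_on f X \<Longrightarrow> total_on X (order_by X f)"
  unfolding order_by_def total_on_def inj_on_def by (auto, metis linorder_neqE)

lemma order_by_insert:
  assumes "inj_on f (insert e X)" "e \<notin> X"
  shows "order_by (insert e X) f = order_by X f \<union> (\<lambda>b. (b, e)) ` {b \<in> X. f b < f e}
           \<union> (\<lambda>b. (e, b)) ` {b \<in> X. \<not> f b < f e}"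
  using assms unfolding order_by_def inj_on_def by (auto simp: not_less le_less)

lemma total_order_eq_order_by:
  assumes "R \<subseteq> X \<times> X" "total_on X R" "\<And>a b. (a, b) \<in> R \<Longrightarrow> f a < f b"
  shows "R = order_by X f" and "inj_on f X"
proof -
  have "(a, b) \<in> R \<longleftrightarrow> a \<in> X \<and> b \<in> X \<and> f a < f b" for a b
    using assms unfolding total_on_def by (metis less_asym less_irrefl mem_Sigma_iff subsetD)
  then show "R = order_by X f"
    unfolding order_by_def by auto
  show "inj_on f X"
    using assms unfolding total_on_def inj_on_def by (metis less_irrefl)
qed

lemma order_by_cuts_chain:
  assumes "order_by X f = order_by X g"
  shows "{b \<in> X. f b < f e} \<subseteq> {b \<in> X. g b < g e} \<or> {b \<in> X. g b < g e} \<subseteq> {b \<in> X. f b < f e}"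
proof (rule ccontr)
  assume "\<not> ?thesis"
  then obtain a b where a: "a \<in> X" "f a < f e" "\<not> g a < g e"
    and b: "b \<in> X" "g b < g e" "\<not> f b < f e"
    by blast
  then have "(a, b) \<in> order_by X f"
    unfolding order_by_def by auto
  then have "g a < g b"
    using assms unfolding order_by_def by auto
  with a b show False
    by auto
qed

section \<open>Rankings by affine functions\<close>

definition affine_value ::
  "nat set \<Rightarrow> ('a \<Rightarrow> real) \<Rightarrow> ('a \<Rightarrow> nat \<Rightarrow> real) \<Rightarrow> (nat \<Rightarrow> real) \<Rightarrow> 'a \<Rightarrow> real" where
  "affine_value D c coef w a = c a + (\<Sum>i\<in>D. coef a i * w i)"

definition affine_rankings ::
  "'a set \<Rightarrow> nat set \<Rightarrow> ('a \<Rightarrow> real) \<Rightarrow> ('a \<Rightarrow> nat \<Rightarrow> real) \<Rightarrow> 'a rel set" where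
  "affine_rankings X D c coef =
     {order_by X (affine_value D c coef w) | w. inj_on (affine_value D c coef w) X}"

definition hyperplane_rankings ::
  "'a set \<Rightarrow> nat set \<Rightarrow> ('a \<Rightarrow> real) \<Rightarrow> ('a \<Rightarrow> nat \<Rightarrow> real) \<Rightarrow> 'a \<Rightarrow> 'a \<Rightarrow> 'a rel set" where
  "hyperplane_rankings X D c coef e b =
     {order_by X (affine_value D c coef w) | w.
        inj_on (affine_value D c coef w) X \<and> affine_value D c coef w e = affine_value D c coef w b}"

lemma finite_affine_rankings: "finite X \<Longrightarrow> finite (affine_rankings X D c coef)"
proof -
  assume "finite X"
  have "affine_rankings X D c coef \<subseteq> Pow (X \<times> X)"
    unfolding affine_rankings_def using order_by_subset by blast
  with \<open>finite X\<close> show ?thesis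
    by (meson finite_Pow_iff finite_SigmaI finite_subset)
qed

lemma hyperplane_rankings_subset: "hyperplane_rankings X D c coef e b \<subseteq> affine_rankings X D c coef"
  unfolding hyperplane_rankings_def affine_rankings_def by blast

lemma affine_rankings_no_dims: "affine_rankings X {} c coef \<subseteq> {order_by X c}"
  unfolding affine_rankings_def affine_value_def by auto

lemma affine_rankings_coincident:
  assumes "e \<in> X" "b \<in> X" "e \<noteq> b" "\<And>w. affine_value D c coef w e = affine_value D c coef w b"
  shows "affine_rankings X D c coef = {}"
  unfolding affine_rankings_def using assms by (auto dest: inj_onD)

lemma affine_value_convex_comb:
  "affine_value D c coef (\<lambda>i. (1 - t) * w1 i + t * w2 i) a
     = (1 - t) * affine_value D c coef w1 a + t * affine_value D c coef w2 a"
  unfolding affine_value_def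
  by (simp add: algebra_simps sum.distrib sum_distrib_left sum_subtractf)

lemma convex_comb_less:
  fixes t x1 x2 y1 y2 :: real
  assumes "0 \<le> t" "t \<le> 1" "x1 < y1" "x2 < y2"
  shows "(1 - t) * x1 + t * x2 < (1 - t) * y1 + t * y2"
proof (cases "t = 0")
  case False
  then have "t * x2 < t * y2" using assms by simp
  moreover have "(1 - t) * x1 \<le> (1 - t) * y1" using assms by (simp add: mult_left_mono)
  ultimately show ?thesis by linarith
qed (use assms in simp)

lemma order_by_convex_comb:
  fixes f g :: "'a \<Rightarrow> real"
  assumes "inj_on f X" "order_by X g = order_by X f" "0 \<le> t" "t \<le> 1"
  defines "h \<equiv> \<lambda>a. (1 - t) * f a + t * g a"
  shows "inj_on h X" and "order_by X h = order_by X f"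
proof -
  have "h a < h b" if "(a, b) \<in> order_by X f" for a b
  proof -
    have "f a < f b" "g a < g b"
      using that assms(2) unfolding order_by_def by blast+
    then show ?thesis
      unfolding h_def by (rule convex_comb_less[OF assms(3,4)])
  qed
  then show "inj_on h X" "order_by X h = order_by X f"
    using total_order_eq_order_by[OF order_by_subset total_on_order_by[OF assms(1)]] by metis+
qed

lemma convex_comb_crossing:
  fixes x y u v :: real
  assumes "x < y" "v < u"
  obtains t where "0 \<le> t" "t \<le> 1" "(1 - t) * x + t * u = (1 - t) * y + t * v"
proof
  define t where "t = (y - x) / ((y - x) + (u - v))"
  show "0 \<le> t" "t \<le> 1" using assms unfolding t_def by (auto simp: field_simps)
  show "(1 - t) * x + t * u = (1 - t) * y + t * v"
    using assms unfolding t_def by (simp add: field_simps)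
qed

lemma hyperplane_rankings_crossing:
  assumes "inj_on (affine_value D c coef w1) X"
    and "order_by X (affine_value D c coef w2) = order_by X (affine_value D c coef w1)"
    and "affine_value D c coef w1 e < affine_value D c coef w1 b"
    and "affine_value D c coef w2 b < affine_value D c coef w2 e"
  shows "order_by X (affine_value D c coef w1) \<in> hyperplane_rankings X D c coef e b"
proof -
  obtain t where t: "0 \<le> t" "t \<le> 1"
    and cross: "(1 - t) * affine_value D c coef w1 e + t * affine_value D c coef w2 e
              = (1 - t) * affine_value D c coef w1 b + t * affine_value D c coef w2 b"
    using convex_comb_crossing[OF assms(3,4)] .
  define w where "w i = (1 - t) * w1 i + t * w2 i" for i
  have "affine_value D c coef w = (\<lambda>a. (1 - t) * affine_value D c coef w1 a + t * affine_value D c coef w2 a)"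
    unfolding w_def by (rule ext) (rule affine_value_convex_comb)
  with order_by_convex_comb[OF assms(1,2) t] cross show ?thesis
    unfolding hyperplane_rankings_def by (metis (mono_tags, lifting) mem_Collect_eq)
qed

lemma cut_diff_subset_hyperplane:
  assumes "e \<notin> X" "inj_on (affine_value D c coef w1) (insert e X)"
    and "inj_on (affine_value D c coef w2) (insert e X)"
    and "order_by X (affine_value D c coef w1) = order_by X (affine_value D c coef w2)"
  shows "{b \<in> X. affine_value D c coef w1 b < affine_value D c coef w1 e}
           - {b \<in> X. affine_value D c coef w2 b < affine_value D c coef w2 e}
         \<subseteq> {b \<in> X. order_by X (affine_value D c coef w1) \<in> hyperplane_rankings X D c coef e b}"
proof
  fix b
  let ?V = "affine_value D c coef"
  assume b: "b \<in> {b \<in> X. ?V w1 b < ?V w1 e} - {b \<in> X. ?V w2 b < ?V w2 e}"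
  then have "b \<in> X" "?V w1 b < ?V w1 e" "\<not> ?V w2 b < ?V w2 e"
    by auto
  moreover have "?V w2 b \<noteq> ?V w2 e"
    using assms(1,3) \<open>b \<in> X\<close> by (metis inj_onD insert_iff)
  ultimately have "order_by X (?V w2) \<in> hyperplane_rankings X D c coef e b"
    using hyperplane_rankings_crossing[of D c coef w2 X w1 e b] assms(2-4)
    by (simp add: inj_on_insert)
  with \<open>b \<in> X\<close> assms(4) show "b \<in> {b \<in> X. order_by X (?V w1) \<in> hyperplane_rankings X D c coef e b}"
    by simp
qed

(* A ranking of X + {e} restricting to tau is determined by its set of points below e. These sets
   form a chain, and at a point b where two of them differ, interpolating between the two
   parameters realises tau with e and b tied. *)
lemma card_fiber_le:
  assumes "finite X" "e \<notin> X"
  shows "card {R \<in> affine_rankings (insert e X) D c coef. R \<inter> X \<times> X = \<tau>}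
           \<le> 1 + card {b \<in> X. \<tau> \<in> hyperplane_rankings X D c coef e b}"
proof -
  let ?V = "affine_value D c coef"
  define W where "W = {w. inj_on (?V w) (insert e X) \<and> order_by X (?V w) = \<tau>}"
  define cut where "cut w = {b \<in> X. ?V w b < ?V w e}" for w
  define extend where "extend \<kappa> = \<tau> \<union> (\<lambda>b. (b, e)) ` \<kappa> \<union> (\<lambda>b. (e, b)) ` (X - \<kappa>)" for \<kappa>
  have cover: "{R \<in> affine_rankings (insert e X) D c coef. R \<inter> X \<times> X = \<tau>} \<subseteq> extend ` cut ` W"
  proof
    fix R
    assume "R \<in> {R \<in> affine_rankings (insert e X) D c coef. R \<inter> X \<times> X = \<tau>}"
    then obtain w where w: "inj_on (?V w) (insert e X)" "R = order_by (insert e X) (?V w)"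
      "R \<inter> X \<times> X = \<tau>"
      unfolding affine_rankings_def by blast
    then have "w \<in> W"
      using order_by_restrict[of X "insert e X"] unfolding W_def by auto
    moreover have "X - cut w = {b \<in> X. \<not> ?V w b < ?V w e}"
      unfolding cut_def by blast
    then have "R = extend (cut w)"
      using order_by_insert[OF w(1) assms(2)] \<open>w \<in> W\<close> unfolding W_def extend_def cut_def w(2) by simp
    ultimately show "R \<in> extend ` cut ` W"
      by blast
  qed
  have fin: "finite (\<Union>(cut ` W))"
    using assms(1) unfolding cut_def by (auto intro: finite_subset)
  then have "finite (cut ` W)"
    by (rule finite_UnionD)
  then have "card {R \<in> affine_rankings (insert e X) D c coef. R \<inter> X \<times> X = \<tau>}
      \<le> card (extend ` cut ` W)"
    using cover by (rule card_mono[OF finite_imageI])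
  also have "\<dots> \<le> card (cut ` W)"
    using \<open>finite (cut ` W)\<close> by (rule card_image_le)
  also have "\<dots> \<le> 1 + card (\<Union>(cut ` W) - \<Inter>(cut ` W))"
  proof (rule card_chain_le[OF fin], unfold chain_subset_def, intro ballI)
    fix \<kappa>1 \<kappa>2
    assume "\<kappa>1 \<in> cut ` W" "\<kappa>2 \<in> cut ` W"
    then obtain w1 w2 where "w1 \<in> W" "w2 \<in> W" "\<kappa>1 = cut w1" "\<kappa>2 = cut w2"
      by blast
    then show "\<kappa>1 \<subseteq> \<kappa>2 \<or> \<kappa>2 \<subseteq> \<kappa>1"
      unfolding W_def cut_def using order_by_cuts_chain[of X "?V w1" "?V w2" e] by simp
  qed
  also have "\<dots> \<le> 1 + card {b \<in> X. \<tau> \<in> hyperplane_rankings X D c coef e b}"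
  proof -
    have "cut w1 - cut w2 \<subseteq> {b \<in> X. \<tau> \<in> hyperplane_rankings X D c coef e b}"
      if "w1 \<in> W" "w2 \<in> W" for w1 w2
      using cut_diff_subset_hyperplane[OF assms(2), of D c coef w1 w2] that
      unfolding W_def cut_def by simp
    then have "\<Union>(cut ` W) - \<Inter>(cut ` W) \<subseteq> {b \<in> X. \<tau> \<in> hyperplane_rankings X D c coef e b}"
      by blast
    then show ?thesis
      using assms(1) by (simp add: card_mono)
  qed
  finally show ?thesis .
qed

lemma card_affine_rankings_insert_le:
  assumes "finite X" "e \<notin> X"
  shows "card (affine_rankings (insert e X) D c coef)
           \<le> card (affine_rankings X D c coef) + (\<Sum>b\<in>X. card (hyperplane_rankings X D c coef e b))"
proof -
  define fiber where "fiber \<tau> = {R \<in> affine_rankings (insert e X) D c coef. R \<inter> X \<times> X = \<tau>}" for \<tau>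
  let ?Rs = "affine_rankings X D c coef"
  have fin: "finite ?Rs" "finite (affine_rankings (insert e X) D c coef)"
    using assms(1) by (simp_all add: finite_affine_rankings)
  have "affine_rankings (insert e X) D c coef \<subseteq> (\<Union>\<tau>\<in>?Rs. fiber \<tau>)"
  proof
    fix R
    assume R: "R \<in> affine_rankings (insert e X) D c coef"
    then obtain w where "inj_on (affine_value D c coef w) (insert e X)"
      "R = order_by (insert e X) (affine_value D c coef w)"
      unfolding affine_rankings_def by blast
    then have "R \<inter> X \<times> X \<in> ?Rs"
      unfolding affine_rankings_def using order_by_restrict[of X "insert e X"]
      by (metis (mono_tags, lifting) inj_on_insert mem_Collect_eq subset_insertI)
    with R show "R \<in> (\<Union>\<tau>\<in>?Rs. fiber \<tau>)"
      unfolding fiber_def by blast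
  qed
  moreover have "finite (\<Union>\<tau>\<in>?Rs. fiber \<tau>)"
    using fin unfolding fiber_def by auto
  ultimately have "card (affine_rankings (insert e X) D c coef) \<le> card (\<Union>\<tau>\<in>?Rs. fiber \<tau>)"
    by (rule card_mono[rotated])
  also have "\<dots> \<le> (\<Sum>\<tau>\<in>?Rs. card (fiber \<tau>))"
    using fin(1) by (rule card_UN_le)
  also have "\<dots> \<le> (\<Sum>\<tau>\<in>?Rs. 1 + card {b \<in> X. \<tau> \<in> hyperplane_rankings X D c coef e b})"
    unfolding fiber_def by (intro sum_mono card_fiber_le assms)
  also have "\<dots> = card ?Rs + (\<Sum>\<tau>\<in>?Rs. card {b \<in> X. \<tau> \<in> hyperplane_rankings X D c coef e b})"
    by (simp add: sum.distrib del: One_nat_def plus_1_eq_Suc)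
  also have "(\<Sum>\<tau>\<in>?Rs. card {b \<in> X. \<tau> \<in> hyperplane_rankings X D c coef e b})
      = (\<Sum>b\<in>X. card (hyperplane_rankings X D c coef e b))"
  proof (rule sum_multicount_gen[OF fin(1) assms(1)], intro ballI)
    fix b
    have "{\<tau> \<in> ?Rs. \<tau> \<in> hyperplane_rankings X D c coef e b} = hyperplane_rankings X D c coef e b"
      using hyperplane_rankings_subset[of X D c coef e b] by blast
    then show "card {\<tau> \<in> ?Rs. \<tau> \<in> hyperplane_rankings X D c coef e b}
        = card (hyperplane_rankings X D c coef e b)"
      by simp
  qed
  finally show ?thesis .
qed

lemma affine_value_on_hyperplane:
  assumes "i0 \<in> D" "finite D" "coef e i0 \<noteq> coef b i0"
  obtains c' coef' where "\<And>w. affine_value D c coef w e = affine_value D c coef w b \<Longrightarrow>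
      affine_value (D - {i0}) c' coef' w = affine_value D c coef w"
proof
  \<comment> \<open>solve the hyperplane equation for \<open>w i0\<close>\<close>
  define m where "m i = coef e i - coef b i" for i
  define c0 where "c0 = c e - c b"
  have m0: "m i0 \<noteq> 0" using assms(3) unfolding m_def by simp
  have split: "(\<Sum>i\<in>D. f i) = f i0 + (\<Sum>i\<in>D - {i0}. f i)" for f :: "nat \<Rightarrow> real"
    using assms(1,2) by (simp add: sum.remove)
  fix w
  assume on_hyperplane: "affine_value D c coef w e = affine_value D c coef w b"
  then have "c0 + (\<Sum>i\<in>D. m i * w i) = 0"
    unfolding affine_value_def c0_def m_def by (simp add: algebra_simps sum_subtractf)
  then have w_i0: "c0 + (\<Sum>i\<in>D - {i0}. m i * w i) = - m i0 * w i0"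
    using split[of "\<lambda>i. m i * w i"] by simp
  show "affine_value (D - {i0}) (\<lambda>a. c a - coef a i0 * c0 / m i0)
          (\<lambda>a i. coef a i - coef a i0 * m i / m i0) w = affine_value D c coef w"
  proof
    fix a
    have "affine_value (D - {i0}) (\<lambda>a. c a - coef a i0 * c0 / m i0)
            (\<lambda>a i. coef a i - coef a i0 * m i / m i0) w a
        = c a + (\<Sum>i\<in>D - {i0}. coef a i * w i) - coef a i0 * (c0 + (\<Sum>i\<in>D - {i0}. m i * w i)) / m i0"
      unfolding affine_value_def
      by (simp add: algebra_simps sum_subtractf sum_distrib_left sum_divide_distrib
          add_divide_distrib diff_divide_distrib)
    also have "\<dots> = c a + (\<Sum>i\<in>D - {i0}. coef a i * w i) + coef a i0 * w i0"
      unfolding w_i0 using m0 by (simp add: field_simps)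
    also have "\<dots> = affine_value D c coef w a"
      unfolding affine_value_def using split[of "\<lambda>i. coef a i * w i"] by simp
    finally show "affine_value (D - {i0}) (\<lambda>a. c a - coef a i0 * c0 / m i0)
            (\<lambda>a i. coef a i - coef a i0 * m i / m i0) w a = affine_value D c coef w a" .
  qed
qed

lemma card_hyperplane_rankings_le:
  assumes "finite D" "card D = Suc k"
    and "affine_value D c coef w0 e \<noteq> affine_value D c coef w0 b"
    and bound: "\<And>D' c' coef'. finite D' \<Longrightarrow> card D' = k \<Longrightarrow> card (affine_rankings X D' c' coef') \<le> N"
    and "finite X"
  shows "card (hyperplane_rankings X D c coef e b) \<le> N"
proof (cases "\<forall>i\<in>D. coef e i = coef b i")
  case True
  then have "affine_value D c coef w e - affine_value D c coef w b = c e - c b" for w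
    unfolding affine_value_def by (simp cong: sum.cong)
  then have "affine_value D c coef w e \<noteq> affine_value D c coef w b" for w
    using assms(3) by (metis eq_iff_diff_eq_0)
  then show ?thesis
    unfolding hyperplane_rankings_def by simp
next
  case False
  then obtain i0 where i0: "i0 \<in> D" "coef e i0 \<noteq> coef b i0"
    by blast
  obtain c' coef' where reduce: "\<And>w. affine_value D c coef w e = affine_value D c coef w b \<Longrightarrow>
      affine_value (D - {i0}) c' coef' w = affine_value D c coef w"
    using affine_value_on_hyperplane[of i0 D coef e b c] i0 assms(1) by blast
  have "hyperplane_rankings X D c coef e b \<subseteq> affine_rankings X (D - {i0}) c' coef'"
  proof
    fix \<tau>
    assume "\<tau> \<in> hyperplane_rankings X D c coef e b"
    then obtain w where w: "\<tau> = order_by X (affine_value D c coef w)"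
      "inj_on (affine_value D c coef w) X" "affine_value D c coef w e = affine_value D c coef w b"
      unfolding hyperplane_rankings_def by blast
    have "affine_value D c coef w = affine_value (D - {i0}) c' coef' w"
      using reduce w(3) by simp
    with w(1,2) show "\<tau> \<in> affine_rankings X (D - {i0}) c' coef'"
      unfolding affine_rankings_def by auto
  qed
  then have "card (hyperplane_rankings X D c coef e b) \<le> card (affine_rankings X (D - {i0}) c' coef')"
    using assms(5) by (intro card_mono finite_affine_rankings)
  also have "\<dots> \<le> N"
    using bound[of "D - {i0}"] assms(1,2) i0(1) by simp
  finally show ?thesis .
qed

section \<open>Counting affine rankings\<close>

(* Equals the sum of the unsigned Stirling numbers of the first kind [n, n - i] over i \<le> k. *)
fun ranking_bound :: "nat \<Rightarrow> nat \<Rightarrow> nat" where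
  "ranking_bound 0 k = 1"
| "ranking_bound (Suc n) 0 = 1"
| "ranking_bound (Suc n) (Suc k) = ranking_bound n (Suc k) + n * ranking_bound n k"

lemma card_affine_rankings_insert_le_ranking_bound:
  assumes "finite X" "e \<notin> X" "finite D" "card D = Suc k"
    and "\<And>b. b \<in> X \<Longrightarrow> \<exists>w. affine_value D c coef w e \<noteq> affine_value D c coef w b"
    and IH: "\<And>D' c' coef'. finite D' \<Longrightarrow>
      card (affine_rankings X D' c' coef') \<le> ranking_bound (card X) (card D')"
  shows "card (affine_rankings (insert e X) D c coef) \<le> ranking_bound (Suc (card X)) (card D)"
proof -
  have "card (hyperplane_rankings X D c coef e b) \<le> ranking_bound (card X) k" if b: "b \<in> X" for b
  proof -
    obtain w0 where w0: "affine_value D c coef w0 e \<noteq> affine_value D c coef w0 b"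
      using assms(5)[OF b] by blast
    show ?thesis
      by (rule card_hyperplane_rankings_le[OF assms(3,4) w0 _ assms(1)]) (metis IH)
  qed
  then have "(\<Sum>b\<in>X. card (hyperplane_rankings X D c coef e b)) \<le> (\<Sum>b\<in>X. ranking_bound (card X) k)"
    by (rule sum_mono)
  moreover have "card (affine_rankings X D c coef) \<le> ranking_bound (card X) (Suc k)"
    using IH[OF assms(3), of c coef] assms(4) by simp
  ultimately have "card (affine_rankings X D c coef) + (\<Sum>b\<in>X. card (hyperplane_rankings X D c coef e b))
      \<le> ranking_bound (card X) (Suc k) + card X * ranking_bound (card X) k"
    by simp
  then show ?thesis
    using card_affine_rankings_insert_le[OF assms(1,2), of D c coef] assms(4) by simp
qed

lemma card_affine_rankings_le:
  "finite X \<Longrightarrow> finite D \<Longrightarrow> card (affine_rankings X D c coef) \<le> ranking_bound (card X) (card D)"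
proof (induction "card X" arbitrary: X D c coef)
  case 0
  then have "affine_rankings X D c coef \<subseteq> {{}}"
    unfolding affine_rankings_def order_by_def by auto
  then have "card (affine_rankings X D c coef) \<le> card {{} :: 'a rel}"
    by (intro card_mono) auto
  then show ?case
    using 0 by simp
next
  case (Suc n)
  obtain e X' where X: "X = insert e X'" "e \<notin> X'" "card X' = n" "finite X'"
    using Suc.hyps(2)[symmetric] unfolding card_Suc_eq_finite by blast
  show ?case
  proof (cases "D = {}")
    case True
    have "card (affine_rankings X D c coef) \<le> card {order_by X c}"
      unfolding True by (intro card_mono affine_rankings_no_dims) simp
    also have "\<dots> = ranking_bound (card X) (card D)"
      unfolding True Suc.hyps(2)[symmetric] by simp
    finally show ?thesis .
  next
    case False
    then obtain k where k: "card D = Suc k"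
      using Suc.prems(2) by (metis card_0_eq not0_implies_Suc)
    show ?thesis
    proof (cases "\<exists>b\<in>X'. \<forall>w. affine_value D c coef w e = affine_value D c coef w b")
      case True
      then obtain b where "b \<in> X'" "\<And>w. affine_value D c coef w e = affine_value D c coef w b"
        by blast
      then have "affine_rankings X D c coef = {}"
        using X(1,2) by (intro affine_rankings_coincident[of e X b]) auto
      then show ?thesis by simp
    next
      case False
      then show ?thesis
        using card_affine_rankings_insert_le_ranking_bound[OF X(4,2) Suc.prems(2) k, of c coef]
          Suc.hyps(1)[OF X(3)[symmetric] X(4)] X(1,3) Suc.hyps(2)
        by auto
    qed
  qed
qed

lemma ranking_bound_eq_fact: "n \<le> k + 1 \<Longrightarrow> ranking_bound n k = fact n"
proof (induction n k rule: ranking_bound.induct)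
  case (3 n k)
  then show ?case by (simp add: algebra_simps)
qed auto

lemma add_one_power_ge: "(D + k + 1) * D ^ k \<le> (D + 1) ^ (k + 1 :: nat)"
proof (induction k)
  case (Suc k)
  have "(D + Suc k + 1) * D ^ Suc k = D * ((D + k + 1) * D ^ k) + D ^ Suc k"
    by (simp add: algebra_simps)
  also have "\<dots> \<le> D * (D + 1) ^ (k + 1) + (D + 1) ^ (k + 1)"
    using Suc.IH power_mono[of D "D + 1" "Suc k"] by (intro add_mono mult_left_mono) auto
  also have "\<dots> = (D + 1) ^ (Suc k + 1)"
    by (simp add: algebra_simps)
  finally show ?case .
qed simp

lemma ranking_bound_le: "k + 1 \<le> n \<Longrightarrow> ranking_bound n k \<le> (k + 1) ^ (n - k - 1) * fact (k + 1)"
proof (induction n k rule: ranking_bound.induct)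
  case (3 n k)
  show ?case
  proof (cases "n = k + 1")
    case True
    then show ?thesis
      using ranking_bound_eq_fact[of "Suc n" "Suc k"] by simp
  next
    case False
    define j where "j = n - k - 2"
    have n: "n = j + k + 2"
      using "3.prems" False unfolding j_def by simp
    have "ranking_bound (Suc n) (Suc k) = ranking_bound n (Suc k) + n * ranking_bound n k"
      by simp
    also have "\<dots> \<le> (k + 2) ^ j * fact (k + 2) + n * ((k + 1) ^ (j + 1) * fact (k + 1))"
      using "3.IH" n by (intro add_mono mult_left_mono) (simp_all add: numeral_2_eq_2)
    also have "n * ((k + 1) ^ (j + 1) * fact (k + 1)) = ((k + 1 + j + 1) * (k + 1) ^ j) * ((k + 1) * fact (k + 1))"
      unfolding n by (simp add: algebra_simps)
    also have "\<dots> \<le> (k + 2) ^ (j + 1) * ((k + 1) * fact (k + 1))"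
      using add_one_power_ge[of "k + 1" j] by (intro mult_right_mono) (simp_all add: numeral_2_eq_2)
    also have "(k + 2) ^ j * fact (k + 2) + (k + 2) ^ (j + 1) * ((k + 1) * fact (k + 1))
        = (Suc k + 1) ^ (Suc n - Suc k - 1) * fact (Suc k + 1)"
      unfolding n by (simp add: algebra_simps fact_Suc numeral_2_eq_2)
    finally show ?thesis by simp
  qed
qed simp_all

section \<open>Preferences and positions\<close>

lemma finite_prefs: "finite (prefs A)"
proof -
  have "prefs A \<subseteq> Pow ({1..A} \<times> {1..A})"
    unfolding prefs_def by auto
  then show ?thesis
    by (rule finite_subset) simp
qed

lemma prefsD:
  assumes "R \<in> prefs A"
  shows "R \<subseteq> {1..A} \<times> {1..A}" "trans R" "irrefl R" "total_on {1..A} R"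
  using assms unfolding prefs_def strict_linear_order_on_def by auto

lemma position_less:
  assumes "R \<in> prefs A" "(a, b) \<in> R"
  shows "position R a < position R b"
proof -
  have "{c. (c, a) \<in> R} \<subset> {c. (c, b) \<in> R}"
    using assms prefsD[OF assms(1)] unfolding irrefl_def by (auto dest: transD)
  moreover have "{c. (c, b) \<in> R} \<subseteq> {1..A}"
    using prefsD(1)[OF assms(1)] by auto
  then have "finite {c. (c, b) \<in> R}"
    by (rule finite_subset) simp
  ultimately show ?thesis
    unfolding position_def by (simp add: psubset_card_mono)
qed

lemma position_le:
  assumes "R \<in> prefs A" "a \<in> {1..A}"
  shows "position R a \<le> A"
proof -
  have "{c. (c, a) \<in> R} \<subseteq> {1..A} - {a}"
    using prefsD(1,3)[OF assms(1)] unfolding irrefl_def by auto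
  then have "card {c. (c, a) \<in> R} \<le> A - 1"
    using card_mono[of "{1..A} - {a}"] assms(2) by simp
  moreover have "1 \<le> A"
    using assms(2) by simp
  ultimately show ?thesis
    unfolding position_def by linarith
qed

lemma card_prefs_le_fact: "card (prefs A) \<le> fact A"
proof -
  define \<pi> where "\<pi> R a = (if a \<in> {1..A} then position R a else a)" for R a
  have order: "R = order_by {1..A} (\<pi> R)" "inj_on (\<pi> R) {1..A}" if R: "R \<in> prefs A" for R
  proof -
    have "\<pi> R a < \<pi> R b" if "(a, b) \<in> R" for a b
      using that position_less[OF R] prefsD(1)[OF R] unfolding \<pi>_def by auto
    from total_order_eq_order_by[OF prefsD(1,4)[OF R], of "\<pi> R", OF this]
    show "R = order_by {1..A} (\<pi> R)" "inj_on (\<pi> R) {1..A}" by blast+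
  qed
  have "\<pi> R permutes {1..A}" if R: "R \<in> prefs A" for R
  proof (rule bij_imp_permutes)
    have "\<pi> R ` {1..A} \<subseteq> {1..A}"
      using position_le[OF R] unfolding \<pi>_def position_def by auto
    then show "bij_betw (\<pi> R) {1..A} {1..A}"
      using order(2)[OF R] by (simp add: bij_betw_def endo_inj_surj)
  qed (auto simp: \<pi>_def)
  moreover have "inj_on \<pi> (prefs A)"
    using order(1) by (metis inj_onI)
  ultimately have "card (prefs A) \<le> card {p. p permutes {1..A}}"
    by (intro card_inj_on_le) (auto simp: finite_permutations)
  then show ?thesis
    by (simp add: card_permutations)
qed

section \<open>Euclidean preferences\<close>

lemma edist_less_edist_iff:
  "edist d x u < edist d y u \<longleftrightarrow>
     (\<Sum>i<d. (x i)\<^sup>2) + (\<Sum>i<d. - 2 * x i * u i) < (\<Sum>i<d. (y i)\<^sup>2) + (\<Sum>i<d. - 2 * y i * u i)"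
proof -
  have expand: "(\<Sum>i<d. (z i - u i)\<^sup>2) = (\<Sum>i<d. (z i)\<^sup>2) + (\<Sum>i<d. - 2 * z i * u i) + (\<Sum>i<d. (u i)\<^sup>2)"
    for z :: "nat \<Rightarrow> real"
  proof -
    have "(z i - u i)\<^sup>2 = (z i)\<^sup>2 + - 2 * z i * u i + (u i)\<^sup>2" for i
      by (simp add: power2_diff)
    then show ?thesis
      by (simp only: sum.distrib)
  qed
  show ?thesis
    unfolding edist_def by (simp add: sum_nonneg expand)
qed

lemma representable_imp_affine_rankings:
  assumes "representable d A S" "S \<subseteq> prefs A"
  obtains c coef where "S \<subseteq> affine_rankings {1..A} {..<d} c coef"
proof -
  obtain x :: "nat \<Rightarrow> nat \<Rightarrow> real" and w :: "nat rel \<Rightarrow> nat \<Rightarrow> real" where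
    xw: "\<forall>R\<in>S. \<forall>a\<in>{1..A}. \<forall>b\<in>{1..A}.
           (a, b) \<in> R \<longleftrightarrow> edist d (x a) (w R) < edist d (x b) (w R)"
    using assms(1) unfolding representable_def by blast
  define c where "c a = (\<Sum>i<d. (x a i)\<^sup>2)" for a
  define coef where "coef a i = - 2 * x a i" for a i
  have "R \<in> affine_rankings {1..A} {..<d} c coef" if "R \<in> S" for R
  proof -
    have R: "R \<subseteq> {1..A} \<times> {1..A}" "total_on {1..A} R"
      using prefsD(1,4) that assms(2) by blast+
    have "affine_value {..<d} c coef (w R) a < affine_value {..<d} c coef (w R) b"
      if "(a, b) \<in> R" for a b
      using that R(1) xw \<open>R \<in> S\<close> edist_less_edist_iff
      unfolding affine_value_def c_def coef_def by (auto simp: mult.assoc)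
    with total_order_eq_order_by[OF R, of "affine_value {..<d} c coef (w R)"] show ?thesis
      unfolding affine_rankings_def by blast
  qed
  then show thesis
    using that by blast
qed

lemma max_repr_le_ranking_bound: "max_repr d A \<le> ranking_bound A d"
proof -
  have bound: "card S \<le> ranking_bound A d" if S: "S \<subseteq> prefs A" "representable d A S" for S
  proof -
    obtain c coef where "S \<subseteq> affine_rankings {1..A} {..<d} c coef"
      using representable_imp_affine_rankings[OF S(2,1)] by blast
    then have "card S \<le> card (affine_rankings {1..A} {..<d} c coef)"
      by (intro card_mono finite_affine_rankings) auto
    also have "\<dots> \<le> ranking_bound A d"
      using card_affine_rankings_le[of "{1..A}" "{..<d}" c coef] by simp
    finally show ?thesis .
  qed
  have "representable d A {}"
    unfolding representable_def by simp
  then show ?thesis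
    unfolding max_repr_def using bound
    by (intro Max.boundedI) (auto intro: finite_subset[of _ "{..ranking_bound A d}"])
qed

section \<open>Orderings outside the event C\<close>

fun list_order :: "'a list \<Rightarrow> 'a rel" where
  "list_order [] = {}"
| "list_order (x # xs) = {x} \<times> set xs \<union> list_order xs"

lemma list_order_subset: "list_order xs \<subseteq> set xs \<times> set xs"
  by (induction xs) auto

lemma list_order_append: "list_order (xs @ ys) = list_order xs \<union> set xs \<times> set ys \<union> list_order ys"
  by (induction xs) auto

lemma trans_list_order: "distinct xs \<Longrightarrow> trans (list_order xs)"
proof (induction xs)
  case (Cons x xs)
  then show ?case
    using list_order_subset[of xs] unfolding trans_def by auto
qed simp

lemma list_order_in_prefs: "distinct xs \<Longrightarrow> set xs = {1..A} \<Longrightarrow> list_order xs \<in> prefs A"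
proof -
  assume xs: "distinct xs" "set xs = {1..A}"
  have "irrefl (list_order xs)"
    using xs(1) list_order_subset by (induction xs) (auto simp: irrefl_def)
  moreover have "total_on (set xs) (list_order xs)"
    by (induction xs) (auto simp: total_on_def)
  ultimately show ?thesis
    using xs list_order_subset[of xs] trans_list_order[OF xs(1)]
    unfolding prefs_def strict_linear_order_on_def by simp
qed

lemma list_order_inj:
  "distinct xs \<Longrightarrow> distinct ys \<Longrightarrow> set xs = set ys \<Longrightarrow> list_order xs = list_order ys \<Longrightarrow> xs = ys"
proof (induction xs arbitrary: ys)
  case Nil
  then show ?case by simp
next
  case (Cons x xs)
  then obtain y ys' where ys: "ys = y # ys'"
    by (metis list.set_cases list.set_intros(1))
  have "x = y"
  proof (rule ccontr)
    assume "x \<noteq> y"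
    then have "(y, x) \<in> list_order (x # xs)"
      using Cons.prems(3,4) ys by auto
    then show False
      using Cons.prems(1) list_order_subset[of xs] by auto
  qed
  have drop_head: "list_order zs = list_order (y # zs) - {y} \<times> UNIV" if "y \<notin> set zs" for zs
    using that list_order_subset[of zs] by auto
  have "list_order xs = list_order ys'"
    using drop_head[of xs] drop_head[of ys'] Cons.prems ys \<open>x = y\<close> by simp
  moreover have "set xs = set ys'"
    using Cons.prems(1-3) ys \<open>x = y\<close> by (metis Diff_insert_absorb distinct.simps(2) list.simps(15))
  ultimately show ?case
    using Cons.IH[of ys'] Cons.prems(1,2) ys \<open>x = y\<close> by simp
qed

definition insert_at :: "nat \<Rightarrow> 'a \<Rightarrow> 'a list \<Rightarrow> 'a list" where
  "insert_at p x xs = take p xs @ x # drop p xs"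

lemma set_insert_at: "set (insert_at p x xs) = insert x (set xs)"
proof -
  have "set xs = set (take p xs) \<union> set (drop p xs)"
    by (metis append_take_drop_id set_append)
  then show ?thesis
    unfolding insert_at_def by auto
qed

lemma distinct_insert_at:
  assumes "distinct xs" "x \<notin> set xs"
  shows "distinct (insert_at p x xs)"
proof -
  have "set (take p xs) \<inter> set (drop p xs) = {}"
    using assms(1) by (metis append_take_drop_id distinct_append)
  then show ?thesis
    using assms unfolding insert_at_def by (auto dest: in_set_takeD in_set_dropD)
qed

lemma remove1_insert_at:
  assumes "x \<notin> set xs"
  shows "remove1 x (insert_at p x xs) = xs"
proof -
  have "x \<notin> set (take p xs)"
    using assms by (meson in_set_takeD)
  then show ?thesis
    unfolding insert_at_def by (simp add: remove1_append)
qed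

lemma list_order_insert_at: "list_order xs \<subseteq> list_order (insert_at p x xs)"
proof -
  have "list_order xs = list_order (take p xs @ drop p xs)"
    by simp
  then show ?thesis
    unfolding insert_at_def list_order_append by auto
qed

lemma position_insert_at:
  assumes "p \<le> length xs" "distinct xs" "x \<notin> set xs"
  shows "position (list_order (insert_at p x xs)) x = p + 1"
proof -
  have "x \<notin> set (take p xs)" "x \<notin> set (drop p xs)"
    using assms(3) by (meson in_set_takeD in_set_dropD)+
  then have "{b. (b, x) \<in> list_order (insert_at p x xs)} = set (take p xs)"
    using list_order_subset[of "take p xs"] list_order_subset[of "drop p xs"]
    unfolding insert_at_def list_order_append by auto
  moreover have "card (set (take p xs)) = p"
    using assms(1,2) by (simp add: distinct_card)
  ultimately show ?thesis
    unfolding position_def by simp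
qed

lemma position_mono:
  assumes "R \<subseteq> R'" "finite {b. (b, a) \<in> R'}"
  shows "position R a \<le> position R' a"
proof -
  have "card {b. (b, a) \<in> R} \<le> card {b. (b, a) \<in> R'}"
    using assms by (intro card_mono) auto
  then show ?thesis
    unfolding position_def by simp
qed

(* Orderings of M - j, ..., M + d in which every n < M has at least M - n predecessors, so that
   E_n fails; for j = M - 1 they are orderings of all alternatives outside C. *)
definition late_lists :: "nat \<Rightarrow> nat \<Rightarrow> nat \<Rightarrow> nat list set" where
  "late_lists M d j = {xs \<in> permutations_of_set {M - j..M + d}.
     \<forall>n\<in>{M - j..<M}. M - n < position (list_order xs) n}"

lemma late_lists_0: "late_lists M d 0 = permutations_of_set {M..M + d}"
  unfolding late_lists_def by simp

lemma late_listsD: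
  assumes "xs \<in> late_lists M d j" "j < M"
  shows "distinct xs" "set xs = {M - j..M + d}" "length xs = d + j + 1"
    and "\<And>n. n \<in> {M - j..<M} \<Longrightarrow> M - n < position (list_order xs) n"
proof -
  show xs: "distinct xs" "set xs = {M - j..M + d}"
    using assms(1) unfolding late_lists_def permutations_of_set_def by auto
  show "length xs = d + j + 1"
    using distinct_card[OF xs(1)] xs(2) assms(2) by simp
  show "\<And>n. n \<in> {M - j..<M} \<Longrightarrow> M - n < position (list_order xs) n"
    using assms(1) unfolding late_lists_def by auto
qed

lemma insert_at_late_lists:
  assumes "j < M" "xs \<in> late_lists M d j" "p \<in> {j + 1..j + d + 1}"
  shows "insert_at p (M - Suc j) xs \<in> late_lists M d (Suc j)"
proof -
  let ?x = "M - Suc j"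
  let ?ys = "insert_at p ?x xs"
  note xs = late_listsD[OF assms(2,1)]
  have x: "?x \<notin> set xs" and p: "p \<le> length xs"
    using assms(1,3) xs(2,3) by auto
  have "set ?ys = {M - Suc j..M + d}"
    using assms(1) xs(2) unfolding set_insert_at by auto
  moreover have "distinct ?ys"
    using distinct_insert_at[OF xs(1) x] .
  moreover have "M - n < position (list_order ?ys) n" if n: "n \<in> {M - Suc j..<M}" for n
  proof (cases "n = ?x")
    case True
    then show ?thesis
      using position_insert_at[OF p xs(1) x] assms(1,3) by simp
  next
    case False
    then have "M - n < position (list_order xs) n"
      using n xs(4) by auto
    also have "\<dots> \<le> position (list_order ?ys) n"
    proof (rule position_mono[OF list_order_insert_at])
      have "{b. (b, n) \<in> list_order ?ys} \<subseteq> set ?ys"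
        using list_order_subset[of ?ys] by auto
      then show "finite {b. (b, n) \<in> list_order ?ys}"
        by (rule finite_subset) simp
    qed
    finally show ?thesis .
  qed
  ultimately show ?thesis
    unfolding late_lists_def permutations_of_set_def by auto
qed

lemma card_late_lists:
  assumes "j < M"
  shows "(d + 1) ^ j * fact (d + 1) \<le> card (late_lists M d j)"
  using assms
proof (induction j)
  case 0
  then show ?case
    by (simp add: late_lists_0)
next
  case (Suc j)
  let ?x = "M - Suc j"
  let ?ins = "\<lambda>(xs, p). insert_at p ?x xs"
  have "inj_on ?ins (late_lists M d j \<times> {j + 1..j + d + 1})"
  proof (rule inj_onI, clarify)
    fix xs p ys q
    assume xs: "xs \<in> late_lists M d j" and ys: "ys \<in> late_lists M d j"
      and pq: "p \<in> {j + 1..j + d + 1}" "q \<in> {j + 1..j + d + 1}"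
      and eq: "insert_at p ?x xs = insert_at q ?x ys"
    note xs' = late_listsD[OF xs] and ys' = late_listsD[OF ys]
    have x: "?x \<notin> set xs" "?x \<notin> set ys"
      using xs'(2) ys'(2) Suc.prems by auto
    have "p + 1 = q + 1"
      using position_insert_at[of p xs ?x] position_insert_at[of q ys ?x] xs'(1,3) ys'(1,3)
        Suc.prems pq eq x by simp
    moreover have "xs = ys"
      using remove1_insert_at[OF x(1), of p] remove1_insert_at[OF x(2), of q] eq by simp
    ultimately show "xs = ys \<and> p = q" by simp
  qed
  moreover have "?ins ` (late_lists M d j \<times> {j + 1..j + d + 1}) \<subseteq> late_lists M d (Suc j)"
    using insert_at_late_lists Suc.prems by auto
  moreover have "finite (late_lists M d (Suc j))"
    unfolding late_lists_def by simp
  ultimately have "card (late_lists M d j \<times> {j + 1..j + d + 1}) \<le> card (late_lists M d (Suc j))"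
    by (rule card_inj_on_le)
  moreover have "(d + 1) ^ j * fact (d + 1) \<le> card (late_lists M d j)"
    using Suc by simp
  then have "(d + 1) ^ j * fact (d + 1) * (d + 1) \<le> card (late_lists M d j) * (d + 1)"
    by (rule mult_right_mono) simp
  moreover have "(d + 1) ^ Suc j * fact (d + 1) = (d + 1) ^ j * fact (d + 1) * (d + 1)"
    by (simp add: algebra_simps)
  ultimately show ?case
    by (simp only: card_cartesian_product card_atLeastAtMost) simp
qed

lemma list_order_late_lists:
  assumes "d < A - 1" "xs \<in> late_lists (A - d) d (A - d - 1)"
  shows "list_order xs \<in> prefs A - event_C A d"
proof -
  define M where "M = A - d"
  have M: "2 \<le> M" "A = M + d" "M - 1 < M"
    using assms(1) unfolding M_def by auto
  note late = late_listsD[OF assms(2)[folded M_def] M(3)]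
  have "list_order xs \<in> prefs A"
    using list_order_in_prefs[OF late(1)] late(2) M by simp
  moreover have "list_order xs \<notin> event_C A d"
  proof
    assume "list_order xs \<in> event_C A d"
    then obtain n where n: "n \<in> {1..A - d - 1}" and early: "position (list_order xs) n \<le> M - n"
      unfolding event_C_def M_def by blast
    have "n \<in> {M - (M - 1)..<M}"
      using n M(1) unfolding M_def by auto
    then have "M - n < position (list_order xs) n"
      by (rule late(4))
    with early show False
      by simp
  qed
  ultimately show ?thesis
    by blast
qed

lemma card_prefs_diff_event_C:
  assumes "d < A - 1"
  shows "(d + 1) ^ (A - d - 1) * fact (d + 1) \<le> card (prefs A - event_C A d)"
proof -
  define L where "L = late_lists (A - d) d (A - d - 1)"
  have "A - d - 1 < A - d"
    using assms by simp
  then have "(d + 1) ^ (A - d - 1) * fact (d + 1) \<le> card L"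
    unfolding L_def by (rule card_late_lists)
  also have "card L = card (list_order ` L)"
  proof (rule card_image[symmetric], rule inj_onI)
    fix xs ys
    assume "xs \<in> L" "ys \<in> L" "list_order xs = list_order ys"
    from late_listsD[OF this(1)[unfolded L_def] \<open>A - d - 1 < A - d\<close>]
      late_listsD[OF this(2)[unfolded L_def] \<open>A - d - 1 < A - d\<close>] this(3)
    show "xs = ys"
      by (intro list_order_inj) simp_all
  qed
  also have "\<dots> \<le> card (prefs A - event_C A d)"
    using list_order_late_lists[OF assms] finite_prefs unfolding L_def by (intro card_mono) auto
  finally show ?thesis .
qed

lemma card_diff_le_prob_compl:
  assumes "finite P" "P \<noteq> {}" "real (card P) \<le> F"
  shows "real (card (P - C)) \<le> (1 - measure_pmf.prob (pmf_of_set P) C) * F"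
proof -
  have pos: "0 < real (card P)"
    using assms(1,2) by (simp add: card_gt_0_iff)
  have "real (card (P - C)) = real (card P) - real (card (P \<inter> C))"
    using assms(1) by (simp add: card_Diff_subset_Int of_nat_diff card_mono)
  then have "1 - measure_pmf.prob (pmf_of_set P) C = card (P - C) / card P"
    using assms(1,2) pos by (simp add: measure_pmf_of_set field_simps)
  then have "(1 - measure_pmf.prob (pmf_of_set P) C) * F = card (P - C) * (F / card P)"
    by simp
  moreover have "real (card (P - C)) * 1 \<le> card (P - C) * (F / card P)"
    using assms(3) pos by (intro mult_left_mono) simp_all
  ultimately show ?thesis
    by simp
qed

theorem lemma1:
  fixes A d :: nat and I :: "'i set" and p :: "'i \<Rightarrow> nat rel"
  assumes "0 < A" and "0 < d" and "d < A - 1"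
    and "finite I" and "p ` I \<subseteq> prefs A"
    and "card (p ` I) \<ge> max_repr d A"
  shows "real (max_repr d A)
           \<le> (1 - measure_pmf.prob (pmf_of_set (prefs A)) (event_C A d)) * fact A"
proof -
  \<comment> \<open>only \<open>d < A - 1\<close> is used\<close>
  have "max_repr d A \<le> ranking_bound A d"
    by (rule max_repr_le_ranking_bound)
  also have "\<dots> \<le> (d + 1) ^ (A - d - 1) * fact (d + 1)"
    using assms(3) by (intro ranking_bound_le) simp
  also have "\<dots> \<le> card (prefs A - event_C A d)"
    using assms(3) by (rule card_prefs_diff_event_C)
  finally have r_le: "real (max_repr d A) \<le> card (prefs A - event_C A d)"
    by simp
  have "0 < card (prefs A - event_C A d)"
    using card_prefs_diff_event_C[OF assms(3)] by (rule order_less_le_trans[rotated]) simp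
  then have "prefs A \<noteq> {}"
    by auto
  moreover have "real (card (prefs A)) \<le> fact A"
    using card_prefs_le_fact by (metis of_nat_fact of_nat_le_iff)
  ultimately have "real (card (prefs A - event_C A d))
      \<le> (1 - measure_pmf.prob (pmf_of_set (prefs A)) (event_C A d)) * fact A"
    by (rule card_diff_le_prob_compl[OF finite_prefs])
  with r_le show ?thesis
    by linarith
qed

end
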